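(* Suppose that $$g[\![\rho]\!]p_1^2+\int_{p_1}^0\Big(\Gamma_{\mathrm{rel}}(p)^3+p^2\Gamma_{\mathrm{rel}}(p)\Big)dp<0 .$$ Then $\inf_{\lambda>0}\nu(\lambda)<-1$.
   Context: Constants $g>0$, $p_0<p_1<0$, $[\![\rho]\!]<0$ (density jump air minus water); $\Gamma_{\mathrm{rel}}:[p_1,0]\to(0,\infty)$ a given continuous function (prescribed relative circulation). For $\lambda>0$ let $a(p)=\Gamma_{\mathrm{rel}}(p)$ for $p_1<p<0$, $a(p)=\lambda$ for $p_0<p<p_1$; $\mathscr A=\{\varphi\in H^1((p_0,0)):\varphi(p_0)=\varphi(0)=0\}$; $\mathscr R(\varphi;\lambda)=\dfrac{g[\![\rho]\!]\varphi(p_1)^2+\int_{p_0}^0a^3\varphi_p^2\,dp}{\int_{p_0}^0a\varphi^2\,dp}$; $\nu(\lambda)=\inf_{\varphi\in\mathscr A,\varphi\not\equiv0}\mathscr R(\varphi;\lambda)$. *)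

theory Defs
  imports "HOL-Analysis.Analysis"
begin

text \<open>Coefficient a(p): Gamma_rel on the upper layer (p1,0), the constant lambda on (p0,p1).
  (Values at the single points p1, 0 are irrelevant: null sets.)\<close>
definition coef_a :: "(real \<Rightarrow> real) \<Rightarrow> real \<Rightarrow> real \<Rightarrow> real \<Rightarrow> real" where
  "coef_a Gam p1 lam p = (if p1 < p then Gam p else lam)"

text \<open>H^1((p0,0)) functions vanishing at both endpoints, represented by their continuous
  representative phi together with a weak derivative psi in L^2((p0,0)):
  phi(x) = integral of psi over [p0,x] (so phi(p0) = 0), and phi(0) = 0.\<close>
definition H10_pair :: "real \<Rightarrow> (real \<Rightarrow> real) \<Rightarrow> (real \<Rightarrow> real) \<Rightarrow> bool" where
  "H10_pair p0 phi psi \<longleftrightarrow>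
     psi \<in> borel_measurable lborel \<and>
     set_integrable lborel {p0..0} psi \<and>
     set_integrable lborel {p0..0} (\<lambda>p. (psi p)^2) \<and>
     (\<forall>x\<in>{p0..0}. phi x = (LINT t:{p0..x}|lborel. psi t)) \<and>
     phi 0 = 0"

definition rayleigh ::
  "real \<Rightarrow> real \<Rightarrow> (real \<Rightarrow> real) \<Rightarrow> real \<Rightarrow> real \<Rightarrow> real \<Rightarrow> (real \<Rightarrow> real) \<Rightarrow> (real \<Rightarrow> real) \<Rightarrow> real" where
  "rayleigh g rho Gam p0 p1 lam phi psi =
     (g * rho * (phi p1)^2 + (LINT p:{p0..0}|lborel. (coef_a Gam p1 lam p)^3 * (psi p)^2))
     / (LINT p:{p0..0}|lborel. coef_a Gam p1 lam p * (phi p)^2)"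

definition nu :: "real \<Rightarrow> real \<Rightarrow> (real \<Rightarrow> real) \<Rightarrow> real \<Rightarrow> real \<Rightarrow> real \<Rightarrow> real" where
  "nu g rho Gam p0 p1 lam =
     Inf {rayleigh g rho Gam p0 p1 lam phi psi | phi psi.
            H10_pair p0 phi psi \<and> (\<exists>p\<in>{p0..0}. phi p \<noteq> 0)}"

end

theory Submission
  imports Defs
begin

text \<open>
  For fixed \<open>\<lambda>\<close> the Rayleigh quotient is bounded below: on a short interval
  \<open>[p\<^sub>1 - d, p\<^sub>1]\<close>, where \<open>a = \<lambda>\<close>, the trace \<open>\<phi>(p\<^sub>1)\<^sup>2\<close> is controlled by
  \<open>2d\<integral>\<phi>\<^sub>p\<^sup>2 + (2/d)\<integral>\<phi>\<^sup>2\<close>, and for \<open>d\<close> small the first term is absorbed by \<open>\<lambda>\<^sup>3\<integral>\<phi>\<^sub>p\<^sup>2\<close>.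
  So \<open>\<nu>(\<lambda>)\<close> is a genuine infimum and it suffices to exhibit one quotient below \<open>-1\<close>.
  The tent function, equal to \<open>-p\<close> on \<open>[p\<^sub>1, 0]\<close> and linear on \<open>[p\<^sub>0, p\<^sub>1]\<close>, has numerator
  plus denominator \<open>g\<lbrakk>\<rho>\<rbrakk>p\<^sub>1\<^sup>2 + \<integral>(\<Gamma>\<^sup>3 + p\<^sup>2\<Gamma>) + O(\<lambda>)\<close>, negative for small \<open>\<lambda>\<close>,
  with a positive denominator; hence its quotient is below \<open>-1\<close>.
\<close>

lemma set_integral_nonneg:
  fixes f :: "'a \<Rightarrow> real"
  assumes "\<And>x. x \<in> A \<Longrightarrow> 0 \<le> f x"
  shows "0 \<le> (LINT x:A|M. f x)"
  unfolding set_lebesgue_integral_def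
  by (intro integral_nonneg_AE) (auto simp: assms indicator_def)

lemma set_integral_mono_set:
  fixes f :: "'a \<Rightarrow> real"
  assumes "set_integrable M B f" "A \<in> sets M" "A \<subseteq> B" "\<And>x. x \<in> B \<Longrightarrow> 0 \<le> f x"
  shows "(LINT x:A|M. f x) \<le> (LINT x:B|M. f x)"
  using assms set_integrable_subset[OF assms(1-3)]
  unfolding set_lebesgue_integral_def set_integrable_def
  by (intro integral_mono) (auto simp: indicator_def)

lemma set_integral_Ioc_eq_Icc:
  fixes f :: "real \<Rightarrow> real"
  shows "(LINT x:{a<..b}|lborel. f x) = (LINT x:{a..b}|lborel. f x)"
  by (rule set_integral_discrete_difference[where X = "{a}"]) auto

lemma set_integral_Icc_split:
  fixes f :: "real \<Rightarrow> real"
  assumes "a \<le> c" "c \<le> b" "set_integrable lborel {a..c} f" "set_integrable lborel {c<..b} f"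
  shows "(LINT x:{a..b}|lborel. f x) = (LINT x:{a..c}|lborel. f x) + (LINT x:{c<..b}|lborel. f x)"
proof -
  have "{a..b} = {a..c} \<union> {c<..b}" using assms(1,2) by auto
  then show ?thesis using assms(3,4) by (simp only:) (rule set_integral_Un, auto)
qed

lemma set_integral_shifted_power:
  fixes a b :: real
  assumes "a \<le> b"
  shows "(LINT x:{a..b}|lborel. (x - a)^n) = (b - a)^Suc n / Suc n"
proof -
  have "((\<lambda>x. (x - a)^Suc n / Suc n) has_real_derivative (x - a)^n) (at x within {a..b})" for x
    by (rule derivative_eq_intros refl | simp)+
  then have "(LINT x:{a..b}|lborel. (x - a)^n) = (b - a)^Suc n / Suc n - (a - a)^Suc n / Suc n"
    unfolding set_lebesgue_integral_def has_real_derivative_iff_has_vector_derivative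
    by (intro integral_FTC_atLeastAtMost assms continuous_intros)
  then show ?thesis by simp
qed

lemma square_set_integral_le:
  fixes f :: "'a \<Rightarrow> real"
  assumes f: "set_integrable M A f" and f2: "set_integrable M A (\<lambda>x. (f x)^2)"
    and A: "A \<in> sets M" "emeasure M A \<noteq> \<infinity>"
  shows "(LINT x:A|M. f x)^2 \<le> measure M A * (LINT x:A|M. (f x)^2)"
proof -
  define I where "I = (LINT x:A|M. f x)"
  define Q where "Q = (LINT x:A|M. (f x)^2)"
  define L where "L = measure M A"
  \<comment> \<open>AM-GM pointwise, \<open>2 |f| \<le> t f\<^sup>2 + 1/t\<close>, integrated and then optimised in \<open>t\<close>\<close>
  have AM_GM: "2 * \<bar>I\<bar> \<le> t * Q + L / t" if t: "t > 0" for t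
  proof -
    have const: "set_integrable M A (\<lambda>x. 1 / t)"
      using A unfolding set_integrable_def
      by (simp, intro integrable_divide_zero integrable_real_indicator)
         (auto simp: top.not_eq_extremum)
    have bound: "set_integrable M A (\<lambda>x. t * (f x)^2 + 1 / t)"
      using f2 const by auto
    have pointwise: "\<bar>2 * f x\<bar> \<le> t * (f x)^2 + 1 / t" for x
    proof -
      have "2 * t * \<bar>f x\<bar> \<le> t * (t * (f x)^2) + 1"
        using zero_le_power2[of "t * \<bar>f x\<bar> - 1"]
        by (simp add: power2_eq_square algebra_simps abs_mult_self_eq)
      then show ?thesis using t by (simp add: field_simps abs_mult)
    qed
    have "\<bar>LINT x:A|M. 2 * f x\<bar> \<le> (LINT x:A|M. \<bar>2 * f x\<bar>)"
      using set_integral_norm_bound[of M A "\<lambda>x. 2 * f x"] f by simp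
    also have "\<dots> \<le> (LINT x:A|M. t * (f x)^2 + 1 / t)"
      using f bound pointwise by (intro set_integral_mono set_integrable_abs) auto
    also have "\<dots> = t * Q + L / t"
      using f2 const A by (simp add: Q_def L_def set_integral_const)
    finally show ?thesis by (simp add: I_def abs_mult)
  qed
  have "\<bar>I\<bar> * \<bar>I\<bar> \<le> L * Q"
  proof (cases "I = 0")
    case True
    then show ?thesis
      by (simp add: L_def Q_def set_integral_nonneg)
  next
    case False
    then have "0 < \<bar>I\<bar>" by simp
    have "L > 0"
    proof (rule ccontr)
      assume "\<not> L > 0"
      then have "L = 0" using measure_nonneg[of M A] by (simp add: L_def)
      then have degenerate: "2 * \<bar>I\<bar> \<le> t * Q" if "t > 0" for t
        using AM_GM[OF that] by simp
      have "0 \<le> Q" unfolding Q_def by (rule set_integral_nonneg) simp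
      have "2 * \<bar>I\<bar> \<le> \<bar>I\<bar> / (Q + 1) * Q"
        using \<open>0 < \<bar>I\<bar>\<close> \<open>0 \<le> Q\<close> by (intro degenerate) simp
      also have "\<dots> \<le> \<bar>I\<bar>" using \<open>0 \<le> Q\<close> by (simp add: field_simps)
      finally show False using \<open>0 < \<bar>I\<bar>\<close> by simp
    qed
    have "2 * \<bar>I\<bar> \<le> (L / \<bar>I\<bar>) * Q + \<bar>I\<bar>"
      using AM_GM[of "L / \<bar>I\<bar>"] \<open>0 < \<bar>I\<bar>\<close> \<open>L > 0\<close> by simp
    then show ?thesis using \<open>0 < \<bar>I\<bar>\<close> by (simp add: field_simps)
  qed
  then show ?thesis by (simp add: I_def L_def Q_def power2_eq_square abs_mult_self_eq)
qed

lemma H10_pair_square_le: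
  assumes H: "H10_pair p0 phi psi" and xy: "p0 \<le> x" "x \<le> y" "y \<le> 0"
  shows "(phi y)^2 \<le> 2 * (phi x)^2 + 2 * (y - x) * (LINT t:{x<..y}|lborel. (psi t)^2)"
proof -
  have psi: "set_integrable lborel {p0..0} psi" "set_integrable lborel {p0..0} (\<lambda>t. (psi t)^2)"
    and phi: "\<And>z. z \<in> {p0..0} \<Longrightarrow> phi z = (LINT t:{p0..z}|lborel. psi t)"
    using H by (auto simp: H10_pair_def)
  have psi_xy: "set_integrable lborel {x<..y} psi" "set_integrable lborel {x<..y} (\<lambda>t. (psi t)^2)"
    using xy by (auto intro: set_integrable_subset[OF psi(1)] set_integrable_subset[OF psi(2)])
  define I where "I = (LINT t:{x<..y}|lborel. psi t)"
  have split: "phi y = phi x + I"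
    using xy phi[of x] phi[of y] set_integral_Icc_split[of p0 x y psi] psi_xy(1)
      set_integrable_subset[OF psi(1), of "{p0..x}"]
    by (simp add: I_def)
  have "I^2 \<le> (y - x) * (LINT t:{x<..y}|lborel. (psi t)^2)"
    using square_set_integral_le[OF psi_xy] xy by (simp add: I_def)
  moreover have "(phi x + I)^2 \<le> 2 * (phi x)^2 + 2 * I^2"
    using zero_le_power2[of "phi x - I"] unfolding power2_sum power2_diff by linarith
  ultimately show ?thesis unfolding split by linarith
qed

lemma H10_pair_trace_le:
  assumes H: "H10_pair p0 phi psi" and d: "0 < d" "p0 \<le> y - d" "y \<le> 0"
    and phi2: "set_integrable lborel {y - d..y} (\<lambda>t. (phi t)^2)"
  shows "(phi y)^2 \<le> 2 * d * (LINT t:{y - d..y}|lborel. (psi t)^2)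
                      + 2 / d * (LINT t:{y - d..y}|lborel. (phi t)^2)"
proof -
  define S where "S = (LINT t:{y - d..y}|lborel. (psi t)^2)"
  define P where "P = (LINT t:{y - d..y}|lborel. (phi t)^2)"
  have psi2: "set_integrable lborel {y - d..y} (\<lambda>t. (psi t)^2)"
    using H d by (auto simp: H10_pair_def intro: set_integrable_subset)
  have "0 \<le> S" unfolding S_def by (rule set_integral_nonneg) simp
  have pointwise: "(phi y)^2 / 2 - d * S \<le> (phi x)^2" if x: "x \<in> {y - d..y}" for x
  proof -
    have "(y - x) * (LINT t:{x<..y}|lborel. (psi t)^2) \<le> d * S"
      unfolding S_def using x
      by (intro mult_mono set_integral_mono_set[OF psi2] set_integral_nonneg) auto
    moreover have "(phi y)^2 \<le> 2 * (phi x)^2 + 2 * ((y - x) * (LINT t:{x<..y}|lborel. (psi t)^2))"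
      using H10_pair_square_le[OF H, of x y] x d by (simp only: mult.assoc) simp
    ultimately show ?thesis by linarith
  qed
  have "(LINT t:{y - d..y}|lborel. (phi y)^2 / 2 - d * S) \<le> P"
    unfolding P_def
    by (intro set_integral_mono[OF _ phi2] pointwise borel_integrable_atLeastAtMost') auto
  then have "d * ((phi y)^2 / 2 - d * S) \<le> P"
    using d by (simp add: set_integral_const)
  then show ?thesis using d by (simp add: S_def P_def field_simps)
qed

lemma coef_a_pos:
  assumes "\<And>p. p \<in> {p1..0} \<Longrightarrow> Gam p > 0" "lam > 0" "p \<le> 0"
  shows "coef_a Gam p1 lam p > 0"
  using assms by (auto simp: coef_a_def)

lemma set_integrable_coef_a_power_mult:
  fixes Gam f :: "real \<Rightarrow> real"
  assumes Gam: "continuous_on {p1..0} Gam" and p: "p0 \<le> p1" "p1 \<le> 0"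
    and f: "f \<in> borel_measurable lborel" "set_integrable lborel {p0..0} f"
  shows "set_integrable lborel {p0..0} (\<lambda>p. (coef_a Gam p1 lam p)^n * f p)"
proof -
  obtain B where B: "\<And>p. p \<in> {p1..0} \<Longrightarrow> \<bar>Gam p\<bar> \<le> B"
    using compact_imp_bounded[OF compact_continuous_image[OF Gam compact_Icc]]
    unfolding bounded_iff by fastforce
  define M where "M = max \<bar>lam\<bar> B"
  have "M \<ge> 0" by (simp add: M_def)
  have bounded: "\<bar>coef_a Gam p1 lam p\<bar> \<le> M" if "p \<in> {p0..0}" for p
    using that B[of p] by (auto simp: coef_a_def M_def)
  have "(\<lambda>x. indicator {p1<..0} x *\<^sub>R (Gam x)^n) \<in> borel_measurable borel"
    by (rule borel_measurable_continuous_on_indicator)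
       (auto intro!: continuous_intros continuous_on_subset[OF Gam])
  then have Gam_meas: "(\<lambda>x. indicator {p1<..0} x *\<^sub>R (Gam x)^n) \<in> borel_measurable lborel"
    by simp
  have "(\<lambda>x. indicator {p0..0} x *\<^sub>R ((coef_a Gam p1 lam x)^n * f x)) =
      (\<lambda>x. (indicator {p0..p1} x * lam^n + indicator {p1<..0} x *\<^sub>R (Gam x)^n) * f x)"
    using p by (auto simp: fun_eq_iff indicator_def coef_a_def)
  then have meas: "set_borel_measurable lborel {p0..0} (\<lambda>p. (coef_a Gam p1 lam p)^n * f p)"
    unfolding set_borel_measurable_def using Gam_meas f(1) by simp
  show ?thesis
  proof (rule set_integrable_bound[OF _ meas])
    show "set_integrable lborel {p0..0} (\<lambda>p. M^n * f p)" using f(2) by simp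
    have "\<bar>coef_a Gam p1 lam x\<bar>^n \<le> M^n" if "x \<in> {p0..0}" for x
      using bounded[OF that] by (intro power_mono) auto
    then show "AE x in lborel. x \<in> {p0..0} \<longrightarrow>
        norm ((coef_a Gam p1 lam x)^n * f x) \<le> norm (M^n * f x)"
      using \<open>M \<ge> 0\<close> by (intro AE_I2) (auto simp: abs_mult power_abs intro!: mult_right_mono)
  qed
qed

lemma coef_a_weighted_integral_ge:
  assumes f: "set_integrable lborel {p0..0} (\<lambda>p. (coef_a Gam p1 lam p)^n * f p)"
    and nonneg: "\<And>p. p \<in> {p0..0} \<Longrightarrow> 0 \<le> (coef_a Gam p1 lam p)^n * f p"
    and q: "p0 \<le> q" "p1 \<le> 0"
  shows "lam^n * (LINT p:{q..p1}|lborel. f p) \<le> (LINT p:{p0..0}|lborel. (coef_a Gam p1 lam p)^n * f p)"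
proof -
  have "lam^n * (LINT p:{q..p1}|lborel. f p) = (LINT p:{q..p1}|lborel. (coef_a Gam p1 lam p)^n * f p)"
    unfolding set_integral_mult_right[symmetric]
    by (rule set_lebesgue_integral_cong) (auto simp: coef_a_def)
  also have "\<dots> \<le> (LINT p:{p0..0}|lborel. (coef_a Gam p1 lam p)^n * f p)"
    using q by (intro set_integral_mono_set[OF f] nonneg) auto
  finally show ?thesis .
qed

lemma set_integral_coef_a_split:
  fixes F :: "real \<Rightarrow> real \<Rightarrow> real"
  assumes p: "p0 \<le> p1" "p1 \<le> 0"
    and lower: "set_integrable lborel {p0..p1} (\<lambda>p. F lam p)"
    and upper: "set_integrable lborel {p1<..0} (\<lambda>p. F (Gam p) p)"
  shows "(LINT p:{p0..0}|lborel. F (coef_a Gam p1 lam p) p)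
       = (LINT p:{p0..p1}|lborel. F lam p) + (LINT p:{p1<..0}|lborel. F (Gam p) p)"
proof -
  have "set_integrable lborel {p0..p1} (\<lambda>p. F (coef_a Gam p1 lam p) p)"
    using lower by (subst set_integrable_cong[OF refl refl, of _ _ "\<lambda>p. F lam p"]) (auto simp: coef_a_def)
  moreover have "set_integrable lborel {p1<..0} (\<lambda>p. F (coef_a Gam p1 lam p) p)"
    using upper by (subst set_integrable_cong[OF refl refl, of _ _ "\<lambda>p. F (Gam p) p"]) (auto simp: coef_a_def)
  ultimately have "(LINT p:{p0..0}|lborel. F (coef_a Gam p1 lam p) p)
      = (LINT p:{p0..p1}|lborel. F (coef_a Gam p1 lam p) p) + (LINT p:{p1<..0}|lborel. F (coef_a Gam p1 lam p) p)"
    using p by (rule set_integral_Icc_split[rotated 2])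
  also have "(LINT p:{p0..p1}|lborel. F (coef_a Gam p1 lam p) p) = (LINT p:{p0..p1}|lborel. F lam p)"
    by (rule set_lebesgue_integral_cong) (auto simp: coef_a_def)
  also have "(LINT p:{p1<..0}|lborel. F (coef_a Gam p1 lam p) p) = (LINT p:{p1<..0}|lborel. F (Gam p) p)"
    by (rule set_lebesgue_integral_cong) (auto simp: coef_a_def)
  finally show ?thesis .
qed

lemma rayleigh_numerator_ge:
  fixes Gam phi psi :: "real \<Rightarrow> real"
  assumes p: "p0 < p1" "p1 < 0" and Gam: "continuous_on {p1..0} Gam"
    and Gam_pos: "\<And>p. p \<in> {p1..0} \<Longrightarrow> Gam p > 0" and lam: "lam > 0"
    and H: "H10_pair p0 phi psi"
    and D_int: "set_integrable lborel {p0..0} (\<lambda>p. coef_a Gam p1 lam p * (phi p)^2)"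
    and c: "\<bar>g * rho\<bar> \<le> c" and d: "0 < d" "d \<le> p1 - p0" "2 * c * d \<le> lam^3"
  shows "- (2 * c / (d * lam)) * (LINT p:{p0..0}|lborel. coef_a Gam p1 lam p * (phi p)^2)
           \<le> g * rho * (phi p1)^2 + (LINT p:{p0..0}|lborel. (coef_a Gam p1 lam p)^3 * (psi p)^2)"
proof -
  let ?a = "coef_a Gam p1 lam"
  define T where "T = (LINT p:{p0..0}|lborel. (?a p)^3 * (psi p)^2)"
  define D where "D = (LINT p:{p0..0}|lborel. ?a p * (phi p)^2)"
  define S where "S = (LINT p:{p1 - d..p1}|lborel. (psi p)^2)"
  define P where "P = (LINT p:{p1 - d..p1}|lborel. (phi p)^2)"
  have a_pos: "?a p > 0" if "p \<in> {p0..0}" for p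
    using coef_a_pos[OF Gam_pos lam] that by auto
  have psi: "psi \<in> borel_measurable lborel" "set_integrable lborel {p0..0} (\<lambda>p. (psi p)^2)"
    using H by (auto simp: H10_pair_def)
  have "(\<lambda>p. (psi p)^2) \<in> borel_measurable lborel" using psi(1) by measurable
  then have T_int: "set_integrable lborel {p0..0} (\<lambda>p. (?a p)^3 * (psi p)^2)"
    using p psi(2) by (intro set_integrable_coef_a_power_mult[OF Gam]) auto
  have T: "lam^3 * S \<le> T"
    unfolding S_def T_def using p d a_pos
    by (intro coef_a_weighted_integral_ge[OF T_int]) (auto simp: less_imp_le)
  have D: "lam * P \<le> D"
    using coef_a_weighted_integral_ge[where n = 1 and f = "\<lambda>p. (phi p)^2" and q = "p1 - d"]
      D_int a_pos p d by (simp add: P_def D_def less_imp_le)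
  have trace: "(phi p1)^2 \<le> 2 * d * S + 2 / d * P"
  proof -
    have "set_integrable lborel {p1 - d..p1} (\<lambda>p. ?a p * (phi p)^2)"
      by (rule set_integrable_subset[OF D_int]) (use p d in auto)
    then have "set_integrable lborel {p1 - d..p1} (\<lambda>p. lam * (phi p)^2)"
      by (subst set_integrable_cong[OF refl refl, of _ _ "\<lambda>p. ?a p * (phi p)^2"])
         (auto simp: coef_a_def)
    then have "set_integrable lborel {p1 - d..p1} (\<lambda>p. (phi p)^2)"
      using lam by simp
    then show ?thesis
      unfolding S_def P_def using p d by (intro H10_pair_trace_le[OF H]) auto
  qed
  have "0 \<le> S" unfolding S_def by (rule set_integral_nonneg) simp
  have "0 \<le> c" using c by linarith
  have "- (2 * c / (d * lam)) * D \<le> - (2 * c / (d * lam)) * (lam * P)"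
    using D \<open>0 \<le> c\<close> d lam by (intro mult_left_mono_neg) auto
  also have "\<dots> = - (2 * c / d) * P" using lam by simp
  also have "\<dots> \<le> (lam^3 - 2 * c * d) * S - (2 * c / d) * P"
    using d(3) \<open>0 \<le> S\<close> by simp
  also have "\<dots> = lam^3 * S - c * (2 * d * S + 2 / d * P)"
    by (simp add: algebra_simps)
  also have "\<dots> \<le> T - c * (phi p1)^2"
    using T trace \<open>0 \<le> c\<close> mult_left_mono by fastforce
  also have "\<dots> \<le> g * rho * (phi p1)^2 + T"
    using c mult_right_mono[of "- c" "g * rho" "(phi p1)^2"] by simp
  finally show ?thesis unfolding T_def D_def .
qed

lemma rayleigh_bdd_below:
  fixes Gam :: "real \<Rightarrow> real"
  assumes p: "p0 < p1" "p1 < 0" and Gam: "continuous_on {p1..0} Gam"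
    and Gam_pos: "\<And>p. p \<in> {p1..0} \<Longrightarrow> Gam p > 0" and lam: "lam > 0"
  shows "\<exists>K. \<forall>phi psi. H10_pair p0 phi psi \<longrightarrow> K \<le> rayleigh g rho Gam p0 p1 lam phi psi"
proof -
  \<comment> \<open>the \<open>+ 1\<close> keeps \<open>lam^3 / (2 * c)\<close> away from the junk value of division by zero\<close>
  define c where "c = \<bar>g * rho\<bar> + 1"
  define d where "d = min (p1 - p0) (lam^3 / (2 * c))"
  have c_bound: "\<bar>g * rho\<bar> \<le> c" by (simp add: c_def)
  have "c > 0" by (simp add: c_def add_nonneg_pos)
  then have d: "0 < d" "d \<le> p1 - p0" "2 * c * d \<le> lam^3"
    using p lam by (auto simp: d_def field_simps min_def)
  define K where "K = - (2 * c / (d * lam))"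
  have "K < 0" using \<open>c > 0\<close> d lam by (simp add: K_def)
  have "K \<le> rayleigh g rho Gam p0 p1 lam phi psi" if H: "H10_pair p0 phi psi" for phi psi
  proof (cases "set_integrable lborel {p0..0} (\<lambda>p. coef_a Gam p1 lam p * (phi p)^2)")
    case False
    \<comment> \<open>then the denominator is the junk value 0, and so is the quotient\<close>
    then have "(LINT p:{p0..0}|lborel. coef_a Gam p1 lam p * (phi p)^2) = 0"
      unfolding set_lebesgue_integral_def set_integrable_def by (rule not_integrable_integral_eq)
    then show ?thesis using \<open>K < 0\<close> by (simp add: rayleigh_def)
  next
    case True
    have "0 \<le> (LINT p:{p0..0}|lborel. coef_a Gam p1 lam p * (phi p)^2)"
      using coef_a_pos[OF Gam_pos lam] by (intro set_integral_nonneg) (simp add: less_imp_le)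
    moreover have "K * (LINT p:{p0..0}|lborel. coef_a Gam p1 lam p * (phi p)^2)
        \<le> g * rho * (phi p1)^2 + (LINT p:{p0..0}|lborel. (coef_a Gam p1 lam p)^3 * (psi p)^2)"
      unfolding K_def by (rule rayleigh_numerator_ge[OF p Gam Gam_pos lam H True c_bound d])
    ultimately show ?thesis
      using \<open>K < 0\<close> by (cases "(LINT p:{p0..0}|lborel. coef_a Gam p1 lam p * (phi p)^2) = 0")
        (auto simp: rayleigh_def pos_le_divide_eq)
  qed
  then show ?thesis by blast
qed

lemma nu_le_rayleigh:
  fixes Gam :: "real \<Rightarrow> real"
  assumes "p0 < p1" "p1 < 0" "continuous_on {p1..0} Gam"
    and "\<And>p. p \<in> {p1..0} \<Longrightarrow> Gam p > 0" "lam > 0"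
    and "H10_pair p0 phi psi" "p \<in> {p0..0}" "phi p \<noteq> 0"
  shows "nu g rho Gam p0 p1 lam \<le> rayleigh g rho Gam p0 p1 lam phi psi"
proof -
  obtain K where "\<forall>phi psi. H10_pair p0 phi psi \<longrightarrow> K \<le> rayleigh g rho Gam p0 p1 lam phi psi"
    using rayleigh_bdd_below[OF assms(1-5)] by blast
  then show ?thesis
    unfolding nu_def using assms(6-8) by (intro cInf_lower bdd_belowI[of _ K]) blast+
qed

definition tent :: "real \<Rightarrow> real \<Rightarrow> real \<Rightarrow> real" where
  "tent p0 p1 p = (if p \<le> p1 then p1 / (p0 - p1) * (p - p0) else - p)"

definition tent_slope :: "real \<Rightarrow> real \<Rightarrow> real \<Rightarrow> real" where
  "tent_slope p0 p1 p = (if p \<le> p1 then p1 / (p0 - p1) else - 1)"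

lemma H10_pair_tent:
  assumes p: "p0 < p1" "p1 < 0"
  shows "H10_pair p0 (tent p0 p1) (tent_slope p0 p1)"
proof -
  define k where "k = p1 / (p0 - p1)"
  have slope: "tent_slope p0 p1 = (\<lambda>p. if p \<le> p1 then k else -1)"
    by (simp add: k_def tent_slope_def fun_eq_iff)
  have meas: "tent_slope p0 p1 \<in> borel_measurable lborel"
    unfolding slope by measurable
  have bound: "set_integrable lborel {p0..0} (\<lambda>_. (\<bar>k\<bar> + 1)^n)" for n :: nat
    by (rule borel_integrable_atLeastAtMost') simp
  have "set_borel_measurable lborel {p0..0} (\<lambda>p. (tent_slope p0 p1 p)^n)" for n :: nat
    unfolding set_borel_measurable_def slope by measurable
  then have int: "set_integrable lborel {p0..0} (\<lambda>p. (tent_slope p0 p1 p)^n)" for n :: nat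
    by (rule set_integrable_bound[OF bound[of n]]) (auto simp: slope power_abs intro!: power_mono)
  note int1 = int[where n = 1, simplified] and int2 = int[where n = 2]
  have "tent p0 p1 x = (LINT t:{p0..x}|lborel. tent_slope p0 p1 t)" if x: "x \<in> {p0..0}" for x
  proof (cases "x \<le> p1")
    case True
    have "(LINT t:{p0..x}|lborel. tent_slope p0 p1 t) = (LINT t:{p0..x}|lborel. k)"
      using True by (intro set_lebesgue_integral_cong) (auto simp: slope)
    then show ?thesis using True x by (simp add: set_integral_const tent_def k_def)
  next
    case False
    have "(LINT t:{p0..x}|lborel. tent_slope p0 p1 t) =
        (LINT t:{p0..p1}|lborel. tent_slope p0 p1 t) + (LINT t:{p1<..x}|lborel. tent_slope p0 p1 t)"
      using False p x by (intro set_integral_Icc_split set_integrable_subset[OF int1]) auto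
    also have "(LINT t:{p0..p1}|lborel. tent_slope p0 p1 t) = (LINT t:{p0..p1}|lborel. k)"
      by (intro set_lebesgue_integral_cong) (auto simp: slope)
    also have "(LINT t:{p1<..x}|lborel. tent_slope p0 p1 t) = (LINT t:{p1<..x}|lborel. -1)"
      by (intro set_lebesgue_integral_cong) (auto simp: slope)
    finally show ?thesis
      using False p by (simp add: set_integral_const tent_def k_def field_simps)
  qed
  then show ?thesis
    unfolding H10_pair_def using meas int1 int2 p by (simp add: tent_def)
qed

lemma integral_coef_a_tent_slope:
  fixes Gam :: "real \<Rightarrow> real"
  assumes p: "p0 < p1" "p1 < 0" and Gam: "continuous_on {p1..0} Gam"
  shows "(LINT p:{p0..0}|lborel. (coef_a Gam p1 lam p)^3 * (tent_slope p0 p1 p)^2)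
       = lam^3 * p1^2 / (p1 - p0) + (LINT p:{p1..0}|lborel. (Gam p)^3)"
proof -
  let ?F = "\<lambda>a p. a^3 * (tent_slope p0 p1 p)^2"
  have "set_integrable lborel {p1<..0} (\<lambda>p. (Gam p)^3)"
    by (rule set_integrable_subset[OF borel_integrable_atLeastAtMost'])
       (auto intro!: continuous_intros Gam)
  then have "set_integrable lborel {p1<..0} (\<lambda>p. ?F (Gam p) p)"
    by (subst set_integrable_cong[OF refl refl, of _ _ "\<lambda>p. (Gam p)^3"]) (auto simp: tent_slope_def)
  moreover have "set_integrable lborel {p0..p1} (\<lambda>p. ?F lam p)"
    by (subst set_integrable_cong[OF refl refl, of _ _ "\<lambda>_. lam^3 * (p1 / (p0 - p1))^2"])
       (auto simp: tent_slope_def intro: borel_integrable_atLeastAtMost')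
  moreover have "(LINT p:{p0..p1}|lborel. ?F lam p) = lam^3 * p1^2 / (p1 - p0)"
  proof -
    have "(LINT p:{p0..p1}|lborel. ?F lam p) = (LINT p:{p0..p1}|lborel. lam^3 * (p1 / (p0 - p1))^2)"
      by (rule set_lebesgue_integral_cong) (auto simp: tent_slope_def)
    also have "\<dots> = lam^3 * ((p1 - p0) * (p1 / (p0 - p1))^2)"
      using p by (simp add: set_integral_const)
    also have "(p1 - p0) * (p1 / (p0 - p1))^2 = p1^2 / (p1 - p0)"
    proof -
      have "(p0 - p1)^2 = (p1 - p0)^2" by (simp add: power2_commute)
      then show ?thesis using p by (simp add: power_divide power2_eq_square)
    qed
    finally show ?thesis by simp
  qed
  moreover have "(LINT p:{p1<..0}|lborel. ?F (Gam p) p) = (LINT p:{p1<..0}|lborel. (Gam p)^3)"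
    by (rule set_lebesgue_integral_cong) (auto simp: tent_slope_def)
  ultimately show ?thesis
    using p set_integral_coef_a_split[of p0 p1 ?F lam Gam]
    by (simp add: set_integral_Ioc_eq_Icc)
qed

lemma integral_coef_a_tent:
  fixes Gam :: "real \<Rightarrow> real"
  assumes p: "p0 < p1" "p1 < 0" and Gam: "continuous_on {p1..0} Gam"
  shows "(LINT p:{p0..0}|lborel. coef_a Gam p1 lam p * (tent p0 p1 p)^2)
       = lam * p1^2 * (p1 - p0) / 3 + (LINT p:{p1..0}|lborel. p^2 * Gam p)"
proof -
  let ?F = "\<lambda>a p. a * (tent p0 p1 p)^2"
  let ?c = "lam * (p1 / (p0 - p1))^2"
  have lower: "?F lam p = ?c * (p - p0)^2" if "p \<le> p1" for p
    using that unfolding tent_def by (simp only: if_True power_mult_distrib mult.assoc)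
  have "set_integrable lborel {p1<..0} (\<lambda>p. p^2 * Gam p)"
    by (rule set_integrable_subset[OF borel_integrable_atLeastAtMost'])
       (auto intro!: continuous_intros Gam)
  then have "set_integrable lborel {p1<..0} (\<lambda>p. ?F (Gam p) p)"
    by (subst set_integrable_cong[OF refl refl, of _ _ "\<lambda>p. p^2 * Gam p"]) (auto simp: tent_def)
  moreover have "set_integrable lborel {p0..p1} (\<lambda>p. ?F lam p)"
    by (subst set_integrable_cong[OF refl refl, of _ _ "\<lambda>p. ?c * (p - p0)^2"])
       (auto simp only: lower atLeastAtMost_iff intro!: borel_integrable_atLeastAtMost' continuous_intros)
  moreover have "(LINT p:{p0..p1}|lborel. ?F lam p) = lam * p1^2 * (p1 - p0) / 3"
  proof -
    have "(LINT p:{p0..p1}|lborel. ?F lam p) = (LINT p:{p0..p1}|lborel. ?c * (p - p0)^2)"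
      by (rule set_lebesgue_integral_cong) (simp, auto simp only: lower atLeastAtMost_iff)
    also have "\<dots> = ?c * ((p1 - p0)^3 / 3)"
      using set_integral_shifted_power[of p0 p1 2] p by simp
    also have "\<dots> = lam * p1^2 * (p1 - p0) / 3"
    proof -
      have "(p0 - p1)^2 = (p1 - p0)^2" by (simp add: power2_commute)
      then show ?thesis using p by (simp add: power_divide power2_eq_square power3_eq_cube)
    qed
    finally show ?thesis .
  qed
  moreover have "(LINT p:{p1<..0}|lborel. ?F (Gam p) p) = (LINT p:{p1<..0}|lborel. p^2 * Gam p)"
    by (rule set_lebesgue_integral_cong) (auto simp: tent_def)
  ultimately show ?thesis
    using p set_integral_coef_a_split[of p0 p1 ?F lam Gam]
    by (simp add: set_integral_Ioc_eq_Icc)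
qed

lemma rayleigh_tent:
  fixes Gam :: "real \<Rightarrow> real"
  assumes p: "p0 < p1" "p1 < 0" and Gam: "continuous_on {p1..0} Gam"
  shows "rayleigh g rho Gam p0 p1 lam (tent p0 p1) (tent_slope p0 p1)
       = (g * rho * p1^2 + lam^3 * (p1^2 / (p1 - p0)) + (LINT p:{p1..0}|lborel. (Gam p)^3))
         / (lam * (p1^2 * (p1 - p0) / 3) + (LINT p:{p1..0}|lborel. p^2 * Gam p))"
proof -
  have "tent p0 p1 p1 = - p1" using p by (simp add: tent_def field_simps)
  then show ?thesis
    unfolding rayleigh_def integral_coef_a_tent_slope[OF p Gam] integral_coef_a_tent[OF p Gam]
    by (simp add: mult.assoc add.assoc)
qed

lemma exists_pos_cube_plus_linear_less:
  fixes a b e :: real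
  assumes "0 \<le> a" "0 \<le> b" "0 < e"
  shows "\<exists>x>0. x^3 * a + x * b < e"
proof -
  define x where "x = min 1 (e / (a + b + 1))"
  have x: "0 < x" "x \<le> 1" using assms by (auto simp: x_def)
  have "x \<le> e / (a + b + 1)" by (simp add: x_def)
  then have "x * (a + b + 1) \<le> e" using assms by (simp add: pos_le_divide_eq)
  have "x^3 \<le> x" using x power_le_one[of x 2] mult_left_mono[of "x^2" 1 x]
    by (simp add: power3_eq_cube power2_eq_square)
  then have "x^3 * a + x * b \<le> x * (a + b)"
    using assms by (simp add: distrib_left mult_right_mono)
  also have "\<dots> < e" using x \<open>x * (a + b + 1) \<le> e\<close> by (simp add: algebra_simps)
  finally show ?thesis using x by blast
qed

theorem lemma4p6:
  fixes g rho p0 p1 :: real and Gam :: "real \<Rightarrow> real"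
  assumes "g > 0" and "p0 < p1" and "p1 < 0" and "rho < 0"
    and "continuous_on {p1..0} Gam" and "\<And>p. p \<in> {p1..0} \<Longrightarrow> Gam p > 0"
    and "g * rho * p1^2 + (LINT p:{p1..0}|lborel. (Gam p)^3 + p^2 * Gam p) < 0"
  shows "\<exists>lam>0. nu g rho Gam p0 p1 lam < -1"
proof -
  note p = assms(2,3) and Gam = assms(5) and Gam_pos = assms(6)
  define G3 where "G3 = (LINT p:{p1..0}|lborel. (Gam p)^3)"
  define G1 where "G1 = (LINT p:{p1..0}|lborel. p^2 * Gam p)"
  have "g * rho * p1^2 + G3 + G1 < 0"
    using assms(7) Gam unfolding G3_def G1_def
    by (subst (asm) set_integral_add) (auto intro!: borel_integrable_atLeastAtMost' continuous_intros)
  moreover obtain lam where lam: "lam > 0"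
    "lam^3 * (p1^2 / (p1 - p0)) + lam * (p1^2 * (p1 - p0) / 3) < - (g * rho * p1^2 + G3 + G1)"
    using exists_pos_cube_plus_linear_less[of "p1^2 / (p1 - p0)" "p1^2 * (p1 - p0) / 3"
        "- (g * rho * p1^2 + G3 + G1)"] calculation p by auto
  moreover have "0 \<le> G1"
    unfolding G1_def using Gam_pos by (intro set_integral_nonneg) (simp add: less_imp_le)
  moreover have "0 < lam * (p1^2 * (p1 - p0) / 3)" using lam(1) p by simp
  ultimately have "rayleigh g rho Gam p0 p1 lam (tent p0 p1) (tent_slope p0 p1) < -1"
    unfolding rayleigh_tent[OF p Gam] G3_def[symmetric] G1_def[symmetric]
    by (simp add: divide_less_eq)
  moreover have "nu g rho Gam p0 p1 lam \<le> rayleigh g rho Gam p0 p1 lam (tent p0 p1) (tent_slope p0 p1)"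
    using p by (intro nu_le_rayleigh[OF p Gam Gam_pos lam(1) H10_pair_tent[OF p], of p1])
      (auto simp: tent_def)
  ultimately show ?thesis using lam(1) by auto
qed

end
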